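(* Let $p\geq3$ be a prime and $n\geq 1$. If $p>n$ then $\mathcal{CP}^{\mathsf{s}}_p(n)=\mathcal{SP}(n)$, and if $p=n$ then $\mathcal{CP}^{\mathsf{s}}_p(n)=\mathcal{SP}(n)\setminus\{(n)\}$.
   Context: $\mathcal{SP}(n)$ is the set of strict partitions $\xi=(\xi_1>\xi_2>\cdots)$ of $n$. $\mathcal{CP}^{\mathsf{s}}_p(n)$ is the set of $\xi\in\mathcal{SP}(n)$ such that either $1\leq\xi_1\leq\frac{p+1}{2}$, or there is an integer $u$ with $1\leq u\leq\frac{p-3}{2}$, $\xi_1=p-u$ and $\xi_2\leq u$. *)

theory Defs
  imports Main "HOL-Computational_Algebra.Primes"
begin

definition SP :: "nat \<Rightarrow> nat list set" where
  "SP n = {xi. sorted_wrt (>) xi \<and> (\<forall>x\<in>set xi. 0 < x) \<and> sum_list xi = n}"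

text \<open>Part xi_i (1-indexed), with the convention xi_i = 0 beyond the length.\<close>
definition part :: "nat list \<Rightarrow> nat \<Rightarrow> nat" where
  "part xi i = (if 1 \<le> i \<and> i \<le> length xi then xi ! (i - 1) else 0)"

definition CPs :: "nat \<Rightarrow> nat \<Rightarrow> nat list set" where
  "CPs p n = {xi \<in> SP n.
      (1 \<le> part xi 1 \<and> 2 * part xi 1 \<le> p + 1)
    \<or> (\<exists>u::nat. 1 \<le> u \<and> 2 * u + 3 \<le> p \<and> part xi 1 = p - u \<and> part xi 2 \<le> u)}"

end

theory Submission
  imports Defs
begin

text \<open>For odd p, membership of a strict partition in CPs p n depends only on its two largest
  parts: it holds iff \<open>\<xi>\<^sub>1 < p\<close> and \<open>\<xi>\<^sub>1 + \<xi>\<^sub>2 \<le> p\<close>. For \<open>n \<le> p\<close> the second condition is automatic,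
  and the first fails only for the one-part partition (p).\<close>

lemma part_Cons_1 [simp]: "part (a # xs) (Suc 0) = a"
  by (simp add: part_def)

lemma part_Cons_2 [simp]: "part (a # xs) 2 = part xs 1"
  by (simp add: part_def nth_Cons')

lemma part_Nil [simp]: "part [] i = 0"
  by (simp add: part_def)

lemma SP_Cons_iff:
  "a # xs \<in> SP n \<longleftrightarrow> (\<forall>x\<in>set xs. x < a) \<and> 0 < a \<and> a \<le> n \<and> xs \<in> SP (n - a)"
  by (auto simp: SP_def)

lemma SP_0: "SP 0 = {[]}"
  by (auto simp: SP_def) (metis last_in_set less_not_refl)

lemma part_1_pos_SP:
  assumes "xi \<in> SP n" "0 < n"
  shows "0 < part xi 1"
  using assms by (cases xi) (auto simp: SP_def)

lemma part_2_less_part_1_SP: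
  assumes "xi \<in> SP n" "xi \<noteq> []"
  shows "part xi 2 < part xi 1"
proof -
  obtain a xs where xi: "xi = a # xs" using assms(2) by (cases xi) auto
  then show ?thesis using assms(1) by (cases xs) (auto simp: SP_Cons_iff)
qed

lemma part_1_add_part_2_le_SP:
  assumes "xi \<in> SP n"
  shows "part xi 1 + part xi 2 \<le> n"
  using assms by (cases xi rule: remdups_adj.cases) (auto simp: SP_def)

lemma part_1_eq_SP_iff:
  assumes "xi \<in> SP n" "0 < n"
  shows "part xi 1 = n \<longleftrightarrow> xi = [n]"
proof
  assume "part xi 1 = n"
  then obtain xs where "xi = n # xs" using assms by (cases xi) auto
  with assms(1) have "xs \<in> SP 0" by (simp add: SP_Cons_iff)
  with \<open>xi = n # xs\<close> show "xi = [n]" by (simp add: SP_0)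
qed simp

theorem CPs_eq_two_largest_parts:
  fixes p n :: nat
  assumes "odd p" "1 < p" "0 < n"
  shows "CPs p n = {xi \<in> SP n. part xi 1 < p \<and> part xi 1 + part xi 2 \<le> p}"
proof (intro set_eqI iffI)
  fix xi assume xi: "xi \<in> CPs p n"
  then have "xi \<in> SP n" by (simp add: CPs_def)
  moreover have "part xi 1 \<noteq> 0" using xi by (auto simp: CPs_def)
  then have "part xi 2 < part xi 1" by (intro part_2_less_part_1_SP[OF \<open>xi \<in> SP n\<close>]) auto
  ultimately show "xi \<in> {xi \<in> SP n. part xi 1 < p \<and> part xi 1 + part xi 2 \<le> p}"
    using xi \<open>1 < p\<close> by (auto simp: CPs_def)
next
  fix xi assume "xi \<in> {xi \<in> SP n. part xi 1 < p \<and> part xi 1 + part xi 2 \<le> p}"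
  then have xi: "xi \<in> SP n" "part xi 1 < p" "part xi 1 + part xi 2 \<le> p" by auto
  have pos: "1 \<le> part xi 1" using part_1_pos_SP[OF xi(1) \<open>0 < n\<close>] by simp
  show "xi \<in> CPs p n"
  proof (cases "2 * part xi 1 \<le> p + 1")
    case True
    then show ?thesis using xi pos by (simp add: CPs_def)
  next
    case False
    \<comment> \<open>as p is odd, the first part is then at least (p + 3)/2, so u = p - \<open>\<xi>\<^sub>1\<close> works\<close>
    then have "p + 3 \<le> 2 * part xi 1" using \<open>odd p\<close> by presburger
    then show ?thesis using xi unfolding CPs_def
      by (intro CollectI conjI disjI2 exI[of _ "p - part xi 1"]) auto
  qed
qed

theorem lemma3p19:
  fixes p n :: nat
  assumes "prime p" and "p \<ge> 3" and "n \<ge> 1"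
  shows "(p > n \<longrightarrow> CPs p n = SP n) \<and> (p = n \<longrightarrow> CPs p n = SP n - {[n]})"
proof -
  have "odd p" using assms(1,2) prime_odd_nat by fastforce
  then have CPs: "CPs p n = {xi \<in> SP n. part xi 1 < p \<and> part xi 1 + part xi 2 \<le> p}"
    using assms(2,3) by (intro CPs_eq_two_largest_parts) auto
  have "CPs p n = SP n" if "n < p"
    using that part_1_add_part_2_le_SP by (fastforce simp: CPs)
  moreover have "CPs p n = SP n - {[n]}" if "p = n"
  proof -
    have "part xi 1 < n \<longleftrightarrow> xi \<noteq> [n]" if "xi \<in> SP n" for xi
      using part_1_eq_SP_iff[OF that] part_1_add_part_2_le_SP[OF that] assms(3) by fastforce
    then show ?thesis unfolding CPs using \<open>p = n\<close> part_1_add_part_2_le_SP by auto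
  qed
  ultimately show ?thesis by blast
qed

end
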